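(* Let $f:\mathbb{R}^n\to(-\infty,+\infty]$ be a proper closed function, let $\mathcal{M}$ be a $C^1$-smooth embedded submanifold containing $\bar x$, and suppose $f$ is $C^1$-partly smooth around $\bar x$ relative to $\mathcal{M}$ with $0\in\operatorname{ri}\partial f(\bar x)$. Then for all $x\in\mathcal{M}$ near $\bar x$, $g_{\mathcal{U}}(x)\in\operatorname{ri}\partial f(x)$ and $g_{\mathcal{U}}(x)=P_{\partial f(x)}(0)$.
   Context: $\hat\partial f$ is the Fréchet and $\partial f$ the limiting subdifferential. Partial smoothness: $f$ is partly smooth at a point $x\in\mathcal M$ relative to a $C^p$ manifold $\mathcal{M}$ (for all subgradients) if: (Regularity) $\hat\partial f(z)=\partial f(z)\neq\varnothing$ for all $z\in\mathcal{M}$ near $x$; (Restricted smoothness) $f|_{\mathcal{M}}$ is $C^p$-smooth around $x$; (Sharpness) $\operatorname{par}\partial f(x)$ (the subspace parallel to the affine hull of $\partial f(x)$) equals $N_x\mathcal{M}$; (Inner semicontinuity) for every $y\in\partial f(x)$ and every sequence $x_r\to x$ in $\mathcal{M}$ there exist $y_r\in\partial f(x_r)$ with $y_r\to y$. "$C^1$-partly smooth around $\bar x$ relative to $\mathcal{M}$" means this holds with $p=1$ at every point of $\mathcal M$ near $\bar x$. For $g\in\partial f(x)$: $\mathcal{V}(x)=\operatorname{lin}(\partial f(x)-g)$, $\mathcal{U}(x)=\mathcal{V}(x)^\perp$, and $g_{\mathcal U}(x)=P_{\mathcal U(x)}(g)$, independent of the choice of $g\in\partial f(x)$. $P_{\partial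 f(x)}(0)$ is the nearest point of the closed convex set $\partial f(x)$ to $0$. *)

theory Defs
  imports "HOL-Analysis.Analysis"
begin

text \<open>Functions f : R^n -> (-infinity, +infinity] are modelled as maps into ereal
  on an arbitrary Euclidean space.\<close>

definition proper_fun :: "('a::euclidean_space \<Rightarrow> ereal) \<Rightarrow> bool" where
  "proper_fun f \<longleftrightarrow> (\<forall>x. f x \<noteq> -\<infinity>) \<and> (\<exists>x. f x \<noteq> \<infinity>)"

definition closed_fun :: "('a::euclidean_space \<Rightarrow> ereal) \<Rightarrow> bool" where
  "closed_fun f \<longleftrightarrow> closed {(x, t::real). f x \<le> ereal t}"

definition frechet_subdiff :: "('a::euclidean_space \<Rightarrow> ereal) \<Rightarrow> 'a \<Rightarrow> 'a set" where
  "frechet_subdiff f x = {v. \<bar>f x\<bar> \<noteq> \<infinity> \<and>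
     (\<forall>e>0. \<exists>d>0. \<forall>y. norm (y - x) < d \<longrightarrow>
        ereal (real_of_ereal (f x) + inner v (y - x) - e * norm (y - x)) \<le> f y)}"

definition limiting_subdiff :: "('a::euclidean_space \<Rightarrow> ereal) \<Rightarrow> 'a \<Rightarrow> 'a set" where
  "limiting_subdiff f x = {v. \<bar>f x\<bar> \<noteq> \<infinity> \<and>
     (\<exists>xs vs. xs \<longlonglongrightarrow> x \<and> (\<lambda>k. f (xs k)) \<longlonglongrightarrow> f x \<and>
        (\<forall>k. vs k \<in> frechet_subdiff f (xs k)) \<and> vs \<longlonglongrightarrow> v)}"

definition C1_on :: "'a::euclidean_space set \<Rightarrow> ('a \<Rightarrow> 'b::euclidean_space) \<Rightarrow> bool" where
  "C1_on U F \<longleftrightarrow> (\<exists>F' :: 'a \<Rightarrow> 'a \<Rightarrow>\<^sub>L 'b.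
      (\<forall>z\<in>U. (F has_derivative blinfun_apply (F' z)) (at z)) \<and> continuous_on U F')"

definition C1_submanifold :: "'a::euclidean_space set \<Rightarrow> bool" where
  "C1_submanifold M \<longleftrightarrow> (\<forall>x\<in>M. \<exists>U V \<phi> \<psi> L. open U \<and> open V \<and> x \<in> U \<and>
      homeomorphism U V (\<phi> :: 'a \<Rightarrow> 'a) (\<psi> :: 'a \<Rightarrow> 'a) \<and> C1_on U \<phi> \<and> C1_on V \<psi> \<and> subspace L \<and>
      \<phi> ` (M \<inter> U) = V \<inter> L)"

definition tangent_space :: "'a::euclidean_space set \<Rightarrow> 'a \<Rightarrow> 'a set" where
  "tangent_space M x = {v. \<exists>\<gamma> e. e > 0 \<and> \<gamma> ` {-e<..<e} \<subseteq> M \<and> \<gamma> 0 = x \<and>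
      (\<gamma> has_vector_derivative v) (at 0)}"

definition normal_space :: "'a::euclidean_space set \<Rightarrow> 'a \<Rightarrow> 'a set" where
  "normal_space M x = {w. \<forall>v\<in>tangent_space M x. inner w v = 0}"

definition par :: "'a::euclidean_space set \<Rightarrow> 'a set" where
  "par S = {u - w | u w. u \<in> affine hull S \<and> w \<in> affine hull S}"

definition partly_smooth_at ::
  "('a::euclidean_space \<Rightarrow> ereal) \<Rightarrow> 'a set \<Rightarrow> 'a \<Rightarrow> bool" where
  "partly_smooth_at f M x \<longleftrightarrow> x \<in> M \<and>
     \<comment> \<open>regularity\<close>
     (\<exists>d>0. \<forall>z\<in>M. dist z x < d \<longrightarrow>
        frechet_subdiff f z = limiting_subdiff f z \<and> limiting_subdiff f z \<noteq> {}) \<and>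
     \<comment> \<open>restricted smoothness (C^1)\<close>
     (\<exists>U F. open U \<and> x \<in> U \<and> C1_on U (F :: 'a \<Rightarrow> real) \<and>
        (\<forall>z\<in>M \<inter> U. f z = ereal (F z))) \<and>
     \<comment> \<open>sharpness\<close>
     par (limiting_subdiff f x) = normal_space M x \<and>
     \<comment> \<open>inner semicontinuity\<close>
     (\<forall>y\<in>limiting_subdiff f x. \<forall>xs. (\<forall>r. xs r \<in> M) \<and> xs \<longlonglongrightarrow> x \<longrightarrow>
        (\<exists>ys. (\<forall>r. ys r \<in> limiting_subdiff f (xs r)) \<and> ys \<longlonglongrightarrow> y))"

definition C1_partly_smooth_around ::
  "('a::euclidean_space \<Rightarrow> ereal) \<Rightarrow> 'a set \<Rightarrow> 'a \<Rightarrow> bool" where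
  "C1_partly_smooth_around f M xbar \<longleftrightarrow>
     (\<exists>d>0. \<forall>x\<in>M. dist x xbar < d \<longrightarrow> partly_smooth_at f M x)"

text \<open>V(x) = lin(\<partial>f(x) - g), U(x) = V(x)^perp, g_U(x) = P_{U(x)} g for g in \<partial>f(x)\<close>
definition V_space :: "('a::euclidean_space \<Rightarrow> ereal) \<Rightarrow> 'a \<Rightarrow> 'a set" where
  "V_space f x = span {v - (SOME g. g \<in> limiting_subdiff f x) | v. v \<in> limiting_subdiff f x}"

definition U_space :: "('a::euclidean_space \<Rightarrow> ereal) \<Rightarrow> 'a \<Rightarrow> 'a set" where
  "U_space f x = {u. \<forall>v\<in>V_space f x. inner u v = 0}"

definition gU :: "('a::euclidean_space \<Rightarrow> ereal) \<Rightarrow> 'a \<Rightarrow> 'a" where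
  "gU f x = closest_point (U_space f x) (SOME g. g \<in> limiting_subdiff f x)"

end

theory Submission
  imports Defs
begin

(* Every s in the subdifferential satisfies s - g_U(x) in V(x), while g_U(x) is orthogonal to
   V(x); so g_U(x) is the point of least norm of the affine hull of the subdifferential, and it
   is the projection of 0 onto the subdifferential as soon as it belongs to it.  It therefore
   suffices to show g_U(x) in ri (subdiff f x) near xbar.  If this failed along x_r -> xbar in M,
   separating g_U(x_r) from the convex set subdiff f (x_r) inside V(x_r), which lies in
   par (subdiff f (x_r)) = N_{x_r} M, would give unit normals u_r with
   <u_r, y> <= <u_r, g_U(x_r)> on subdiff f (x_r).  Inner semicontinuity at 0 forces
   g_U(x_r) -> 0; a limit u of the u_r is a unit vector of N_xbar M = par (subdiff f xbar), since
   normal spaces of a C^1 manifold vary continuously, and inner semicontinuity again gives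
   <u, s> <= 0 on subdiff f xbar.  As 0 lies in the relative interior of subdiff f xbar, this
   forces u = 0. *)

section \<open>Convex analysis\<close>

lemma closest_point_subspace_orthogonal_comp:
  fixes W :: "'a::euclidean_space set"
  assumes "subspace W"
  shows "a - closest_point W a \<in> W\<^sup>\<bottom>"
proof -
  let ?p = "closest_point W a"
  have W: "convex W" "closed W" "W \<noteq> {}"
    using assms subspace_0[OF assms] by (auto simp: subspace_imp_convex closed_subspace)
  have p: "?p \<in> W" by (rule closest_point_in_set[OF W(2,3)])
  have "y \<bullet> (a - ?p) = 0" if y: "y \<in> W" for y
  proof -
    have "?p + y \<in> W" "?p - y \<in> W" using assms p y by (auto simp: subspace_add subspace_diff)
    then have "(a - ?p) \<bullet> y \<le> 0" "(a - ?p) \<bullet> (- y) \<le> 0"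
      using closest_point_dot[OF W(1,2), of _ a] by fastforce+
    then show ?thesis by (simp add: inner_commute)
  qed
  then show ?thesis by (simp add: orthogonal_comp_def orthogonal_def)
qed

lemma norm_le_if_orthogonal_diff:
  fixes p s :: "'a::real_inner"
  assumes "p \<bullet> (s - p) = 0"
  shows "norm p \<le> norm s"
proof -
  have "(norm s)\<^sup>2 = (norm p)\<^sup>2 + (norm (s - p))\<^sup>2"
    using norm_add_Pythagorean[of p "s - p"] assms by (simp add: orthogonal_def)
  then show ?thesis by (simp add: power2_le_imp_le)
qed

lemma closest_point_0_eqI:
  fixes S :: "'a::euclidean_space set"
  assumes p: "p \<in> S" and orth: "\<And>s. s \<in> S \<Longrightarrow> p \<bullet> (s - p) = 0"
  shows "closest_point S 0 = p"
  unfolding closest_point_def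
proof (rule some_equality)
  show "p \<in> S \<and> (\<forall>s\<in>S. dist 0 p \<le> dist 0 s)"
    using p orth by (simp add: norm_le_if_orthogonal_diff)
  show "s = p" if s: "s \<in> S \<and> (\<forall>y\<in>S. dist 0 s \<le> dist 0 y)" for s
  proof -
    have "(norm s)\<^sup>2 = (norm p)\<^sup>2 + (norm (s - p))\<^sup>2"
      using norm_add_Pythagorean[of p "s - p"] orth s by (simp add: orthogonal_def)
    moreover have "(norm s)\<^sup>2 \<le> (norm p)\<^sup>2" using s p by (simp add: power_mono)
    ultimately show ?thesis by simp
  qed
qed

lemma span_diffs_subset_par:
  assumes "g \<in> S"
  shows "span {s - g | s. s \<in> S} \<subseteq> par S"
proof -
  have g: "g \<in> affine hull S" using assms by (simp add: hull_inc)
  have "span {s - g | s. s \<in> S} \<subseteq> (\<lambda>a. a - g) ` (affine hull S)"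
    by (rule span_minimal) (auto simp: hull_inc affine_diffs_subspace_subtract[OF _ g])
  then show ?thesis using g unfolding par_def by blast
qed

lemma par_eq_0_if_nonpos_on_rel_interior_0:
  assumes "0 \<in> rel_interior S" "u \<in> par S" "\<And>s. s \<in> S \<Longrightarrow> u \<bullet> s \<le> 0"
  shows "u = 0"
proof (rule ccontr)
  assume "u \<noteq> 0"
  obtain e where "e > 0" and e: "ball 0 e \<inter> affine hull S \<subseteq> S"
    using assms(1) mem_rel_interior_ball by blast
  obtain a b where ab: "a \<in> affine hull S" "b \<in> affine hull S" "u = a - b"
    using assms(2) unfolding par_def by blast
  define t where "t = e / (2 * norm u)"
  have "t > 0" using \<open>e > 0\<close> \<open>u \<noteq> 0\<close> by (simp add: t_def)
  have "0 \<in> S" using assms(1) rel_interior_subset by auto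
  then have "0 + t *\<^sub>R (a - b) \<in> affine hull S"
    by (intro mem_affine_3_minus[OF affine_affine_hull hull_inc ab(1,2)])
  then have "t *\<^sub>R u \<in> affine hull S" by (simp add: ab(3))
  moreover have "t *\<^sub>R u \<in> ball 0 e" using \<open>e > 0\<close> \<open>u \<noteq> 0\<close> by (simp add: t_def)
  ultimately have "u \<bullet> (t *\<^sub>R u) \<le> 0" using e assms(3) by blast
  moreover have "0 < u \<bullet> (t *\<^sub>R u)" using \<open>t > 0\<close> \<open>u \<noteq> 0\<close> by simp
  ultimately show False by simp
qed

lemma proper_separation_not_rel_interior:
  fixes S :: "'a::euclidean_space set"
  assumes S: "convex S" "S \<noteq> {}" and x: "x \<notin> rel_interior S"
  obtains a y0 where "\<And>y. y \<in> S \<Longrightarrow> a \<bullet> x \<le> a \<bullet> y" "y0 \<in> S" "a \<bullet> x < a \<bullet> y0"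
proof (cases "x \<in> closure S")
  case True
  obtain a where le: "\<And>y. y \<in> closure S \<Longrightarrow> a \<bullet> x \<le> a \<bullet> y"
    and lt: "\<And>y. y \<in> rel_interior S \<Longrightarrow> a \<bullet> x < a \<bullet> y"
    using supporting_hyperplane_relative_frontier[OF S(1) True x] by metis
  obtain y0 where "y0 \<in> rel_interior S" using rel_interior_eq_empty S by blast
  then show ?thesis
    using that le lt closure_subset rel_interior_subset by blast
next
  case False
  obtain a b where "a \<bullet> x < b" and "\<forall>y\<in>closure S. b < a \<bullet> y"
    using separating_hyperplane_closed_point[OF convex_closure[OF S(1)] closed_closure False]
    by blast
  then have "a \<bullet> x < a \<bullet> y" if "y \<in> S" for y
    using that closure_subset by fastforce
  then show ?thesis using that S(2) by (meson ex_in_conv less_imp_le)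
qed

lemma unit_vector_supporting_not_rel_interior:
  fixes S :: "'a::euclidean_space set"
  assumes S: "convex S" "S \<noteq> {}" "x \<notin> rel_interior S"
    and W: "subspace W" and diff: "\<And>y. y \<in> S \<Longrightarrow> y - x \<in> W"
  obtains u where "u \<in> W" "norm u = 1" "\<And>y. y \<in> S \<Longrightarrow> u \<bullet> y \<le> u \<bullet> x"
proof -
  obtain a y0 where le: "\<And>y. y \<in> S \<Longrightarrow> a \<bullet> x \<le> a \<bullet> y" and "y0 \<in> S" "a \<bullet> x < a \<bullet> y0"
    using proper_separation_not_rel_interior[OF S] by blast
  obtain a1 a2 where a1: "a1 \<in> span W" and a2: "\<And>w. w \<in> span W \<Longrightarrow> orthogonal a2 w"
    and "a = a1 + a2"
    using orthogonal_subspace_decomp_exists by blast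
  have a1_eq: "a \<bullet> (y - x) = a1 \<bullet> (y - x)" if "y \<in> S" for y
    using a2[OF span_base[OF diff[OF that]]] \<open>a = a1 + a2\<close>
    by (simp add: orthogonal_def inner_add_left)
  \<comment> \<open>Only the \<open>W\<close>-component \<open>a1\<close> of \<open>a\<close> is seen on \<open>S - x\<close>; the strict inequality at
    \<open>y0\<close> keeps it nonzero.\<close>
  have "a1 \<bullet> (y0 - x) > 0"
    using a1_eq[OF \<open>y0 \<in> S\<close>] \<open>a \<bullet> x < a \<bullet> y0\<close> by (simp add: inner_diff_right)
  then have "a1 \<noteq> 0" by auto
  show ?thesis
  proof
    show "- (1 / norm a1) *\<^sub>R a1 \<in> W"
      using a1 W by (metis span_eq_iff subspace_neg subspace_scale)
    show "norm (- (1 / norm a1) *\<^sub>R a1) = 1" using \<open>a1 \<noteq> 0\<close> by simp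
    fix y assume "y \<in> S"
    then have "0 \<le> a1 \<bullet> (y - x)" using a1_eq[of y] le[of y] by (simp add: inner_diff_right)
    then show "(- (1 / norm a1) *\<^sub>R a1) \<bullet> y \<le> (- (1 / norm a1) *\<^sub>R a1) \<bullet> x"
      by (simp add: inner_diff_right divide_right_mono)
  qed
qed

section \<open>Tangent and normal spaces of \<open>C\<^sup>1\<close> submanifolds\<close>

lemma has_vector_derivative_in_subspace:
  fixes h :: "real \<Rightarrow> 'a::euclidean_space"
  assumes L: "subspace L" and ev: "\<forall>\<^sub>F t in nhds 0. h t \<in> L"
    and h: "(h has_vector_derivative w) (at 0)"
  shows "w \<in> L"
proof -
  have "y \<bullet> w = 0" if y: "y \<in> L\<^sup>\<bottom>" for y
  proof -
    have "((\<lambda>t. y \<bullet> h t) has_derivative (\<lambda>t. t * (y \<bullet> w))) (at 0)"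
      using h unfolding has_vector_derivative_def by (auto intro!: derivative_eq_intros)
    moreover have "((\<lambda>t. y \<bullet> h t) has_derivative (\<lambda>t. 0)) (at 0)"
    proof (rule has_derivative_transform_eventually[OF has_derivative_const])
      have "\<forall>\<^sub>F t in nhds 0. 0 = y \<bullet> h t"
        using ev by eventually_elim
          (use y in \<open>auto simp: orthogonal_comp_def orthogonal_def inner_commute\<close>)
      then show "\<forall>\<^sub>F t in at 0. 0 = y \<bullet> h t" "0 = y \<bullet> h 0"
        by (simp_all add: eventually_nhds_conv_at)
    qed simp
    ultimately have "(\<lambda>t. t * (y \<bullet> w)) = (\<lambda>t. 0)" by (rule has_derivative_unique)
    then show ?thesis by (metis mult_1)
  qed
  then have "w \<in> L\<^sup>\<bottom>\<^sup>\<bottom>" by (simp add: orthogonal_comp_def orthogonal_def)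
  then show ?thesis by (simp add: orthogonal_comp_self[OF L])
qed

lemma chart_derivative_image_subset_tangent_space:
  fixes \<phi> \<psi> :: "'a::euclidean_space \<Rightarrow> 'a"
  assumes V: "open V" and hom: "homeomorphism U V \<phi> \<psi>"
    and D\<psi>: "(\<psi> has_derivative D\<psi>) (at (\<phi> x))"
    and L: "subspace L" and chart: "\<phi> ` (M \<inter> U) = V \<inter> L" and x: "x \<in> M \<inter> U"
  shows "D\<psi> ` L \<subseteq> tangent_space M x"
proof
  have \<psi>_M: "\<psi> y \<in> M" if y: "y \<in> V \<inter> L" for y
  proof -
    obtain z where "z \<in> M \<inter> U" "y = \<phi> z" using y unfolding chart[symmetric] by blast
    then show ?thesis by (simp add: homeomorphism_apply1[OF hom])
  qed
  have \<phi>x: "\<phi> x \<in> V \<inter> L" using imageI[OF x, of \<phi>] unfolding chart .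
  fix v assume "v \<in> D\<psi> ` L"
  then obtain l where "l \<in> L" and v: "v = D\<psi> l" by blast
  let ?line = "\<lambda>t::real. \<phi> x + t *\<^sub>R l"
  have "open (?line -` V)" by (intro continuous_open_vimage V continuous_intros)
  moreover have "0 \<in> ?line -` V" using \<phi>x by simp
  ultimately obtain e where "e > 0" and "ball 0 e \<subseteq> ?line -` V"
    by (meson open_contains_ball)
  then have e: "{-e<..<e} \<subseteq> ?line -` V" by (simp add: ball_eq_greaterThanLessThan)
  have "((\<lambda>t. t *\<^sub>R l) has_vector_derivative l) (at 0)"
    by (simp add: has_vector_derivative_def bounded_linear_scaleR_left
        bounded_linear_imp_has_derivative)
  from has_vector_derivative_add[OF has_vector_derivative_const[of "\<phi> x"] this]
  have "(?line has_vector_derivative l) (at 0)" by simp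
  moreover have "(\<psi> has_derivative D\<psi>) (at (?line 0) within range ?line)"
    using D\<psi> by (simp add: has_derivative_at_withinI)
  ultimately have "((\<psi> \<circ> ?line) has_vector_derivative v) (at 0)"
    unfolding v by (rule vector_derivative_diff_chain_within)
  moreover have "?line t \<in> V \<inter> L" if "t \<in> {-e<..<e}" for t
    using e that \<phi>x \<open>l \<in> L\<close> L by (auto simp: subspace_add subspace_scale)
  then have "(\<psi> \<circ> ?line) ` {-e<..<e} \<subseteq> M" using \<psi>_M by auto
  moreover have "(\<psi> \<circ> ?line) 0 = x" using homeomorphism_apply1[OF hom] x by simp
  ultimately show "v \<in> tangent_space M x"
    unfolding tangent_space_def using \<open>e > 0\<close> by blast
qed

lemma tangent_space_subset_chart_derivative_image:
  fixes \<phi> \<psi> :: "'a::euclidean_space \<Rightarrow> 'a"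
  assumes U: "open U" and hom: "homeomorphism U V \<phi> \<psi>"
    and D\<phi>: "(\<phi> has_derivative D\<phi>) (at x)" and D\<psi>: "(\<psi> has_derivative D\<psi>) (at (\<phi> x))"
    and L: "subspace L" and chart: "\<phi> ` (M \<inter> U) = V \<inter> L" and x: "x \<in> M \<inter> U"
  shows "tangent_space M x \<subseteq> D\<psi> ` L"
proof
  fix v assume "v \<in> tangent_space M x"
  then obtain \<gamma> e where "e > 0" and \<gamma>M: "\<gamma> ` {-e<..<e} \<subseteq> M" and "\<gamma> 0 = x"
    and \<gamma>: "(\<gamma> has_vector_derivative v) (at 0)"
    unfolding tangent_space_def by blast
  have "(\<gamma> \<longlongrightarrow> x) (at 0)"
    using has_vector_derivative_continuous[OF \<gamma>] \<open>\<gamma> 0 = x\<close> by (simp add: isCont_def)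
  then have "\<forall>\<^sub>F t in nhds 0. \<gamma> t \<in> U"
    using topological_tendstoD[OF _ U, of \<gamma>] x \<open>\<gamma> 0 = x\<close> by (simp add: eventually_nhds_conv_at)
  moreover have "\<forall>\<^sub>F t in nhds 0. t \<in> {-e<..<e}"
    using \<open>e > 0\<close> by (intro eventually_nhds_in_open) auto
  ultimately have "\<forall>\<^sub>F t in nhds 0. (\<phi> \<circ> \<gamma>) t \<in> L"
    by eventually_elim (use \<gamma>M chart in fastforce)
  moreover have "(\<phi> has_derivative D\<phi>) (at (\<gamma> 0) within range \<gamma>)"
    using D\<phi> \<open>\<gamma> 0 = x\<close> by (simp add: has_derivative_at_withinI)
  then have "((\<phi> \<circ> \<gamma>) has_vector_derivative D\<phi> v) (at 0)"
    by (rule vector_derivative_diff_chain_within[OF \<gamma>])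
  ultimately have "D\<phi> v \<in> L" by (rule has_vector_derivative_in_subspace[OF L])
  have "((\<psi> \<circ> \<phi>) has_derivative D\<psi> \<circ> D\<phi>) (at x)" using D\<phi> D\<psi> by (rule diff_chain_at)
  then have "((\<lambda>z. z) has_derivative D\<psi> \<circ> D\<phi>) (at x)"
    by (rule has_derivative_transform_within_open[OF _ U])
      (use x homeomorphism_apply1[OF hom] in auto)
  from has_derivative_unique[OF this has_derivative_ident]
  have "D\<psi> (D\<phi> v) = v" by (metis comp_apply)
  then show "v \<in> D\<psi> ` L" using \<open>D\<phi> v \<in> L\<close> by (metis image_eqI)
qed

lemma tangent_space_chart:
  fixes \<phi> \<psi> :: "'a::euclidean_space \<Rightarrow> 'a"
  assumes "open U" "open V" "homeomorphism U V \<phi> \<psi>"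
    and "\<And>z. z \<in> U \<Longrightarrow> (\<phi> has_derivative D\<phi> z) (at z)"
    and "\<And>z. z \<in> V \<Longrightarrow> (\<psi> has_derivative D\<psi> z) (at z)"
    and "subspace L" "\<phi> ` (M \<inter> U) = V \<inter> L" "x \<in> M \<inter> U"
  shows "tangent_space M x = D\<psi> (\<phi> x) ` L"
proof -
  have "x \<in> U" "\<phi> x \<in> V" using assms(7,8) by blast+
  show ?thesis
  proof
    show "tangent_space M x \<subseteq> D\<psi> (\<phi> x) ` L"
      by (rule tangent_space_subset_chart_derivative_image[OF assms(1,3)
            assms(4)[OF \<open>x \<in> U\<close>] assms(5)[OF \<open>\<phi> x \<in> V\<close>] assms(6-8)])
    show "D\<psi> (\<phi> x) ` L \<subseteq> tangent_space M x"
      by (rule chart_derivative_image_subset_tangent_space[OF assms(2,3)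
            assms(5)[OF \<open>\<phi> x \<in> V\<close>] assms(6-8)])
  qed
qed

lemma normal_space_limit:
  fixes M :: "'a::euclidean_space set"
  assumes M: "C1_submanifold M" and "xbar \<in> M"
    and xs: "\<And>r. xs r \<in> M" "xs \<longlonglongrightarrow> xbar"
    and us: "\<And>r. us r \<in> normal_space M (xs r)" "us \<longlonglongrightarrow> u"
  shows "u \<in> normal_space M xbar"
proof -
  obtain U V \<phi> \<psi> L where U: "open U" and V: "open V" and "xbar \<in> U"
    and hom: "homeomorphism U V (\<phi> :: 'a \<Rightarrow> 'a) \<psi>" and "C1_on U \<phi>" "C1_on V \<psi>"
    and L: "subspace L" and chart: "\<phi> ` (M \<inter> U) = V \<inter> L"
    using M \<open>xbar \<in> M\<close> unfolding C1_submanifold_def by metis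
  obtain D\<phi> :: "'a \<Rightarrow> 'a \<Rightarrow>\<^sub>L 'a" where D\<phi>: "\<And>z. z \<in> U \<Longrightarrow> (\<phi> has_derivative D\<phi> z) (at z)"
    using \<open>C1_on U \<phi>\<close> unfolding C1_on_def by blast
  obtain D\<psi> :: "'a \<Rightarrow> 'a \<Rightarrow>\<^sub>L 'a" where D\<psi>: "\<And>z. z \<in> V \<Longrightarrow> (\<psi> has_derivative D\<psi> z) (at z)"
    and "continuous_on V D\<psi>"
    using \<open>C1_on V \<psi>\<close> unfolding C1_on_def by blast
  note tangent = tangent_space_chart[OF U V hom D\<phi> D\<psi> L chart]
  \<comment> \<open>A tangent vector \<open>D\<psi> (\<phi> xbar) l\<close> at \<open>xbar\<close> is the limit of the tangent vectors
    \<open>D\<psi> (\<phi> (xs r)) l\<close> at \<open>xs r\<close>, which are orthogonal to \<open>us r\<close>.\<close>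
  have "u \<bullet> v = 0" if vT: "v \<in> tangent_space M xbar" for v
  proof -
    obtain l where "l \<in> L" and v: "v = D\<psi> (\<phi> xbar) l"
      using vT tangent[of xbar] \<open>xbar \<in> M\<close> \<open>xbar \<in> U\<close> by auto
    have "isCont \<phi> xbar"
      using homeomorphism_cont1[OF hom] U \<open>xbar \<in> U\<close>
      by (simp add: continuous_on_eq_continuous_at)
    then have "(\<lambda>r. \<phi> (xs r)) \<longlonglongrightarrow> \<phi> xbar" using xs(2) by (rule isCont_tendsto_compose)
    moreover have "isCont D\<psi> (\<phi> xbar)"
      using \<open>continuous_on V D\<psi>\<close> V homeomorphism_image1[OF hom] \<open>xbar \<in> U\<close>
      by (auto simp: continuous_on_eq_continuous_at)
    ultimately have "(\<lambda>r. D\<psi> (\<phi> (xs r)) l) \<longlonglongrightarrow> v"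
      unfolding v by (intro blinfun.tendsto[OF isCont_tendsto_compose tendsto_const])
    then have "(\<lambda>r. us r \<bullet> D\<psi> (\<phi> (xs r)) l) \<longlonglongrightarrow> u \<bullet> v" by (rule tendsto_inner[OF us(2)])
    moreover have "\<forall>\<^sub>F r in sequentially. us r \<bullet> D\<psi> (\<phi> (xs r)) l = 0"
      using topological_tendstoD[OF xs(2) U \<open>xbar \<in> U\<close>]
    proof eventually_elim
      case (elim r)
      then have "D\<psi> (\<phi> (xs r)) l \<in> tangent_space M (xs r)"
        using tangent[of "xs r"] xs(1) \<open>l \<in> L\<close> by auto
      then show ?case using us(1)[of r] by (simp add: normal_space_def)
    qed
    then have "(\<lambda>r. us r \<bullet> D\<psi> (\<phi> (xs r)) l) \<longlonglongrightarrow> 0" by (rule tendsto_eventually)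
    ultimately show ?thesis by (rule LIMSEQ_unique)
  qed
  then show ?thesis by (simp add: normal_space_def)
qed

section \<open>Subdifferentials of partly smooth functions\<close>

lemma convex_frechet_subdiff: "convex (frechet_subdiff f x)"
proof (rule convexI)
  fix v w and s t :: real
  assume v: "v \<in> frechet_subdiff f x" and w: "w \<in> frechet_subdiff f x"
    and st: "0 \<le> s" "0 \<le> t" "s + t = 1"
  then have t: "t = 1 - s" by simp
  let ?lb = "\<lambda>v e y. real_of_ereal (f x) + inner v (y - x) - e * norm (y - x)"
  have "\<exists>d>0. \<forall>y. norm (y - x) < d \<longrightarrow> ereal (?lb (s *\<^sub>R v + t *\<^sub>R w) e y) \<le> f y"
    if "e > 0" for e
  proof -
    obtain d1 where "d1 > 0" and d1: "\<And>y. norm (y - x) < d1 \<Longrightarrow> ereal (?lb v e y) \<le> f y"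
      using v \<open>e > 0\<close> unfolding frechet_subdiff_def by blast
    obtain d2 where "d2 > 0" and d2: "\<And>y. norm (y - x) < d2 \<Longrightarrow> ereal (?lb w e y) \<le> f y"
      using w \<open>e > 0\<close> unfolding frechet_subdiff_def by blast
    have "ereal (?lb (s *\<^sub>R v + t *\<^sub>R w) e y) \<le> f y" if y: "norm (y - x) < min d1 d2" for y
    proof (cases "f y")
      case (real c)
      have "?lb (s *\<^sub>R v + t *\<^sub>R w) e y = s * ?lb v e y + t * ?lb w e y"
        unfolding t by (simp add: inner_add_left algebra_simps)
      also have "\<dots> \<le> c"
        using d1[of y] d2[of y] y st by (intro convex_bound_le) (simp_all add: real)
      finally show ?thesis by (simp add: real)
    qed (use d1[of y] y in auto)
    then show ?thesis using \<open>d1 > 0\<close> \<open>d2 > 0\<close> by (intro exI[of _ "min d1 d2"]) auto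
  qed
  moreover have "\<bar>f x\<bar> \<noteq> \<infinity>" using v by (simp add: frechet_subdiff_def)
  ultimately show "s *\<^sub>R v + t *\<^sub>R w \<in> frechet_subdiff f x"
    unfolding frechet_subdiff_def by blast
qed

lemma partly_smooth_at_subdiff_nonempty:
  "partly_smooth_at f M x \<Longrightarrow> limiting_subdiff f x \<noteq> {}"
  unfolding partly_smooth_at_def by (metis dist_self)

lemma partly_smooth_at_convex_subdiff:
  "partly_smooth_at f M x \<Longrightarrow> convex (limiting_subdiff f x)"
  unfolding partly_smooth_at_def by (metis convex_frechet_subdiff dist_self)

lemma partly_smooth_at_par_subdiff:
  "partly_smooth_at f M x \<Longrightarrow> par (limiting_subdiff f x) = normal_space M x"
  unfolding partly_smooth_at_def by blast

lemma partly_smooth_at_inner_semicontinuous: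
  assumes "partly_smooth_at f M x" "y \<in> limiting_subdiff f x" "\<And>r. xs r \<in> M" "xs \<longlonglongrightarrow> x"
  obtains ys where "\<And>r. ys r \<in> limiting_subdiff f (xs r)" "ys \<longlonglongrightarrow> y"
  using assms unfolding partly_smooth_at_def by blast

lemma U_space_eq_orthogonal_comp: "U_space f x = (V_space f x)\<^sup>\<bottom>"
  by (auto simp: U_space_def orthogonal_comp_def orthogonal_def inner_commute)

lemma subspace_V_space: "subspace (V_space f x)"
  by (simp add: V_space_def)

lemma gU_orthogonal_V_space:
  assumes "v \<in> V_space f x"
  shows "gU f x \<bullet> v = 0"
proof -
  have "closed (U_space f x)" "U_space f x \<noteq> {}"
    using subspace_0[OF subspace_orthogonal_comp]
    by (auto simp: U_space_eq_orthogonal_comp closed_subspace subspace_orthogonal_comp)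
  then have "gU f x \<in> U_space f x" unfolding gU_def by (rule closest_point_in_set)
  then show ?thesis using assms by (simp add: U_space_def)
qed

lemma subdiff_diff_gU_in_V_space:
  assumes "s \<in> limiting_subdiff f x"
  shows "s - gU f x \<in> V_space f x"
proof -
  let ?g = "SOME g. g \<in> limiting_subdiff f x"
  have "s - ?g \<in> V_space f x"
    using assms unfolding V_space_def by (intro span_base) blast
  moreover have "?g - gU f x \<in> V_space f x"
    using closest_point_subspace_orthogonal_comp[OF subspace_orthogonal_comp, of ?g "V_space f x"]
    by (simp add: gU_def U_space_eq_orthogonal_comp orthogonal_comp_self subspace_V_space)
  ultimately have "(s - ?g) + (?g - gU f x) \<in> V_space f x"
    by (rule subspace_add[OF subspace_V_space])
  then show ?thesis by simp
qed

lemma gU_orthogonal_subdiff_diff: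
  "s \<in> limiting_subdiff f x \<Longrightarrow> gU f x \<bullet> (s - gU f x) = 0"
  by (simp add: gU_orthogonal_V_space subdiff_diff_gU_in_V_space)

lemma norm_gU_le: "s \<in> limiting_subdiff f x \<Longrightarrow> norm (gU f x) \<le> norm s"
  by (simp add: gU_orthogonal_subdiff_diff norm_le_if_orthogonal_diff)

lemma closest_point_subdiff_eq_gU:
  "gU f x \<in> limiting_subdiff f x \<Longrightarrow> closest_point (limiting_subdiff f x) 0 = gU f x"
  by (simp add: closest_point_0_eqI gU_orthogonal_subdiff_diff)

lemma V_space_subset_par:
  "limiting_subdiff f x \<noteq> {} \<Longrightarrow> V_space f x \<subseteq> par (limiting_subdiff f x)"
  unfolding V_space_def by (rule span_diffs_subset_par) (simp add: some_in_eq)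

section \<open>Relative interiority of \<open>g\<^sub>U\<close> near \<open>xbar\<close>\<close>

lemma unit_normal_supporting_gU:
  assumes ps: "partly_smooth_at f M x" and "gU f x \<notin> rel_interior (limiting_subdiff f x)"
  shows "\<exists>u. u \<in> normal_space M x \<and> norm u = 1 \<and>
    (\<forall>y \<in> limiting_subdiff f x. u \<bullet> y \<le> u \<bullet> gU f x)"
proof -
  obtain u where "u \<in> V_space f x" "norm u = 1"
    "\<And>y. y \<in> limiting_subdiff f x \<Longrightarrow> u \<bullet> y \<le> u \<bullet> gU f x"
    using unit_vector_supporting_not_rel_interior[OF partly_smooth_at_convex_subdiff[OF ps]
        partly_smooth_at_subdiff_nonempty[OF ps] assms(2) subspace_V_space
        subdiff_diff_gU_in_V_space]
    by blast
  moreover have "u \<in> normal_space M x"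
    using V_space_subset_par[OF partly_smooth_at_subdiff_nonempty[OF ps]] \<open>u \<in> V_space f x\<close>
      partly_smooth_at_par_subdiff[OF ps] by blast
  ultimately show ?thesis by blast
qed

lemma gU_tendsto_0:
  assumes "partly_smooth_at f M xbar" "0 \<in> limiting_subdiff f xbar"
    and "\<And>r. xs r \<in> M" "xs \<longlonglongrightarrow> xbar"
  shows "(\<lambda>r. gU f (xs r)) \<longlonglongrightarrow> 0"
proof -
  obtain zs where zs: "\<And>r. zs r \<in> limiting_subdiff f (xs r)" "zs \<longlonglongrightarrow> 0"
    using partly_smooth_at_inner_semicontinuous[OF assms] by blast
  have "\<forall>\<^sub>F r in sequentially. norm (gU f (xs r)) \<le> norm (zs r)"
    using zs(1) by (simp add: norm_gU_le always_eventually)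
  moreover have "(\<lambda>r. norm (zs r)) \<longlonglongrightarrow> 0" using zs(2) by (rule tendsto_norm_zero)
  ultimately show ?thesis by (rule Lim_null_comparison)
qed

lemma supporting_inequality_limit:
  assumes ps: "partly_smooth_at f M xbar" and s: "s \<in> limiting_subdiff f xbar"
    and xs: "\<And>r. xs r \<in> M" "xs \<longlonglongrightarrow> xbar" and "us \<longlonglongrightarrow> u" "gs \<longlonglongrightarrow> g"
    and le: "\<And>r y. y \<in> limiting_subdiff f (xs r) \<Longrightarrow> us r \<bullet> y \<le> us r \<bullet> gs r"
  shows "u \<bullet> s \<le> u \<bullet> g"
proof -
  obtain ss where ss: "\<And>r. ss r \<in> limiting_subdiff f (xs r)" "ss \<longlonglongrightarrow> s"
    using partly_smooth_at_inner_semicontinuous[OF ps s xs] by blast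
  have "(\<lambda>r. us r \<bullet> gs r) \<longlonglongrightarrow> u \<bullet> g" using \<open>us \<longlonglongrightarrow> u\<close> \<open>gs \<longlonglongrightarrow> g\<close> by (rule tendsto_inner)
  moreover have "(\<lambda>r. us r \<bullet> ss r) \<longlonglongrightarrow> u \<bullet> s" using \<open>us \<longlonglongrightarrow> u\<close> ss(2) by (rule tendsto_inner)
  moreover have "\<forall>\<^sub>F r in sequentially. us r \<bullet> ss r \<le> us r \<bullet> gs r"
    using le ss(1) by (simp add: always_eventually)
  ultimately show ?thesis by (rule tendsto_le[OF trivial_limit_sequentially])
qed

lemma ex_gU_in_rel_interior_along_sequence:
  assumes M: "C1_submanifold M" and ps: "partly_smooth_at f M xbar"
    and ri: "0 \<in> rel_interior (limiting_subdiff f xbar)"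
    and xs: "\<And>r. xs r \<in> M" "xs \<longlonglongrightarrow> xbar" and ps_xs: "\<And>r. partly_smooth_at f M (xs r)"
  shows "\<exists>r. gU f (xs r) \<in> rel_interior (limiting_subdiff f (xs r))"
proof (rule ccontr)
  assume not_ri: "\<not> ?thesis"
  have "\<forall>r. \<exists>u. u \<in> normal_space M (xs r) \<and> norm u = 1 \<and>
      (\<forall>y \<in> limiting_subdiff f (xs r). u \<bullet> y \<le> u \<bullet> gU f (xs r))"
    using unit_normal_supporting_gU[OF ps_xs] not_ri by blast
  from choice[OF this] obtain us where us: "\<forall>r. us r \<in> normal_space M (xs r) \<and> norm (us r) = 1 \<and>
      (\<forall>y \<in> limiting_subdiff f (xs r). us r \<bullet> y \<le> us r \<bullet> gU f (xs r))"
    by blast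
  have "bounded (range us)" using us by (auto simp: bounded_iff)
  then obtain \<sigma> u where \<sigma>: "strict_mono \<sigma>" and u: "(us \<circ> \<sigma>) \<longlonglongrightarrow> u"
    using bounded_imp_convergent_subsequence by blast
  have ys: "(xs \<circ> \<sigma>) \<longlonglongrightarrow> xbar" using LIMSEQ_subseq_LIMSEQ[OF xs(2) \<sigma>] .
  have "norm u = 1" using tendsto_norm[OF u] us by (simp add: o_def LIMSEQ_const_iff)
  have "xbar \<in> M" using ps unfolding partly_smooth_at_def by blast
  then have "u \<in> par (limiting_subdiff f xbar)"
    using normal_space_limit[OF M _ _ ys _ u] xs(1) us partly_smooth_at_par_subdiff[OF ps] by simp
  moreover have "u \<bullet> s \<le> 0" if "s \<in> limiting_subdiff f xbar" for s
  proof -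
    have g: "(\<lambda>r. gU f ((xs \<circ> \<sigma>) r)) \<longlonglongrightarrow> 0"
      using gU_tendsto_0[OF ps _ _ ys] ri rel_interior_subset xs(1) by auto
    have "u \<bullet> s \<le> u \<bullet> 0"
      by (rule supporting_inequality_limit[OF ps that _ ys u g]) (use xs(1) us in auto)
    then show ?thesis by simp
  qed
  ultimately have "u = 0" by (rule par_eq_0_if_nonpos_on_rel_interior_0[OF ri])
  then show False using \<open>norm u = 1\<close> by simp
qed

lemma gU_in_rel_interior_near:
  assumes M: "C1_submanifold M" and "xbar \<in> M"
    and "C1_partly_smooth_around f M xbar"
    and ri: "0 \<in> rel_interior (limiting_subdiff f xbar)"
  shows "\<exists>d>0. \<forall>x\<in>M. dist x xbar < d \<longrightarrow> gU f x \<in> rel_interior (limiting_subdiff f x)"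
proof -
  obtain d0 where "d0 > 0" and ps: "\<And>x. x \<in> M \<Longrightarrow> dist x xbar < d0 \<Longrightarrow> partly_smooth_at f M x"
    using assms(3) unfolding C1_partly_smooth_around_def by blast
  define B where "B = {x \<in> M. dist x xbar < d0 \<and> gU f x \<notin> rel_interior (limiting_subdiff f x)}"
  have "xbar \<notin> closure B"
  proof
    assume "xbar \<in> closure B"
    then obtain xs where "\<And>r. xs r \<in> B" "xs \<longlonglongrightarrow> xbar" by (meson closure_sequential)
    then show False
      using ex_gU_in_rel_interior_along_sequence[OF M ps[OF \<open>xbar \<in> M\<close>] ri] \<open>d0 > 0\<close> ps
      unfolding B_def by auto
  qed
  then obtain d1 where "d1 > 0" and d1: "\<And>x. x \<in> B \<Longrightarrow> d1 \<le> dist x xbar"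
    by (meson closure_approachable not_le)
  have "gU f x \<in> rel_interior (limiting_subdiff f x)" if "x \<in> M" "dist x xbar < min d0 d1" for x
    using that d1[of x] unfolding B_def by auto
  then show ?thesis using \<open>d0 > 0\<close> \<open>d1 > 0\<close> by (intro exI[of _ "min d0 d1"]) auto
qed

theorem corollary2:
  fixes f :: "'a::euclidean_space \<Rightarrow> ereal" and M :: "'a set" and xbar :: 'a
  assumes "proper_fun f" and "closed_fun f"
    and "C1_submanifold M" and "xbar \<in> M"
    and "C1_partly_smooth_around f M xbar"
    and "0 \<in> rel_interior (limiting_subdiff f xbar)"
  shows "\<exists>d>0. \<forall>x\<in>M. dist x xbar < d \<longrightarrow>
           gU f x \<in> rel_interior (limiting_subdiff f x) \<and>
           gU f x = closest_point (limiting_subdiff f x) 0"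
proof -
  obtain d where "d > 0"
    and ri: "\<And>x. x \<in> M \<Longrightarrow> dist x xbar < d \<Longrightarrow> gU f x \<in> rel_interior (limiting_subdiff f x)"
    using gU_in_rel_interior_near[OF assms(3-6)] by blast
  have "gU f x = closest_point (limiting_subdiff f x) 0" if "x \<in> M" "dist x xbar < d" for x
    using ri[OF that] rel_interior_subset closest_point_subdiff_eq_gU by (metis subsetD)
  then show ?thesis using \<open>d > 0\<close> ri by blast
qed

end
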